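(* Let $\Phi = \{\xi = (\tau_L,\delta_L,\tau_R,\delta_R) \in \mathbb{R}^4 : \tau_L > |\delta_L + 1|,\ \tau_R < -|\delta_R+1|\}$, $\Phi^{(1)} = \{\xi \in \Phi : \delta_L > 0, \delta_R > 0\}$, $\Phi^{(2)} = \{\xi \in \Phi : \delta_L < 0, \delta_R < 0\}$. Let $\alpha(\xi) = \tau_L\tau_R + (\delta_L-1)(\delta_R-1)$, $g(\xi) = (\tau_R^2 - 2\delta_R,\ \delta_R^2,\ \tau_L\tau_R - \delta_L - \delta_R,\ \delta_L\delta_R)$, and for $\xi\in\Phi$ $$\phi^+(\xi) = \delta_R - \big(\tau_R + \delta_L + \delta_R - (1+\tau_R)\lambda_L^u\big)\lambda_L^u,$$ where $\lambda_L^u > 1$ is the eigenvalue of $\begin{bmatrix}\tau_L & 1\\ -\delta_L & 0\end{bmatrix}$ of modulus greater than one. Define, for $n \ge 0$, $$\mathcal{R}^{(1)}_n = \{\xi \in \Phi^{(1)} : \phi^+(g^n(\xi)) > 0,\ \phi^+(g^{n+1}(\xi)) \le 0\},$$ and for $n \ge 1$, $$\mathcal{R}^{(2)}_n = \{\xi \in \Phi^{(2)} : \phi^+(g^n(\xi)) > 0,\ \phi^+(g^{n+1}(\xi)) \le 0,\ \alpha(\xi) < 0\}.$$ If $\xi \in \mathcal{R}^{(2)}_n$ with $n \ge 1$, then $g(\xi) \in \mathcal{R}^{(1)}_{n-1}$.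
   Context: $g^n$ denotes the $n$-fold composition of $g$; the conditions in the set definitions are understood to include that the relevant iterates $g^k(\xi)$ lie in $\Phi$, so that $\phi^+$ is defined at them. *)

theory Defs
  imports Complex_Main
begin

type_synonym param = "real \<times> real \<times> real \<times> real"

definition Phi :: "param set" where
  "Phi = {(tL, dL, tR, dR). tL > \<bar>dL + 1\<bar> \<and> tR < - \<bar>dR + 1\<bar>}"

definition Phi1 :: "param set" where
  "Phi1 = {\<xi> \<in> Phi. case \<xi> of (tL, dL, tR, dR) \<Rightarrow> dL > 0 \<and> dR > 0}"

definition Phi2 :: "param set" where
  "Phi2 = {\<xi> \<in> Phi. case \<xi> of (tL, dL, tR, dR) \<Rightarrow> dL < 0 \<and> dR < 0}"

definition alpha :: "param \<Rightarrow> real" where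
  "alpha \<xi> = (case \<xi> of (tL, dL, tR, dR) \<Rightarrow> tL * tR + (dL - 1) * (dR - 1))"

definition g :: "param \<Rightarrow> param" where
  "g \<xi> = (case \<xi> of (tL, dL, tR, dR) \<Rightarrow>
      (tR\<^sup>2 - 2 * dR, dR\<^sup>2, tL * tR - dL - dR, dL * dR))"

definition lambdaLu :: "real \<Rightarrow> real \<Rightarrow> real" where
  "lambdaLu tL dL = (THE l. (tL - l) * (0 - l) - 1 * (- dL) = 0 \<and> \<bar>l\<bar> > 1)"

definition phi_plus :: "param \<Rightarrow> real" where
  "phi_plus \<xi> = (case \<xi> of (tL, dL, tR, dR) \<Rightarrow>
      dR - (tR + dL + dR - (1 + tR) * lambdaLu tL dL) * lambdaLu tL dL)"

definition R1 :: "nat \<Rightarrow> param set" where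
  "R1 n = {\<xi> \<in> Phi1. (g ^^ n) \<xi> \<in> Phi \<and> (g ^^ (n + 1)) \<xi> \<in> Phi \<and>
      phi_plus ((g ^^ n) \<xi>) > 0 \<and> phi_plus ((g ^^ (n + 1)) \<xi>) \<le> 0}"

definition R2 :: "nat \<Rightarrow> param set" where
  "R2 n = {\<xi> \<in> Phi2. (g ^^ n) \<xi> \<in> Phi \<and> (g ^^ (n + 1)) \<xi> \<in> Phi \<and>
      phi_plus ((g ^^ n) \<xi>) > 0 \<and> phi_plus ((g ^^ (n + 1)) \<xi>) \<le> 0 \<and> alpha \<xi> < 0}"

end

theory Submission
  imports Defs
begin

text \<open>The map g sends the points of Phi2 with alpha < 0 into Phi1, and the iterates
  of g at g \<xi> are those at \<xi> shifted by one, so the conditions defining R2 n at \<xi>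
  are the conditions defining R1 (n - 1) at g \<xi>.\<close>

text \<open>With tL', dL', tR', dR' the components of g, the inequality for tL' holds on all
  of Phi since tL' - \<bar>dL' + 1\<bar> = tR^2 - (dR + 1)^2; when dL dR \<ge> -1, the inequality
  for tR' is tR' + dR' + 1 = alpha < 0.\<close>
lemma g_mem_Phi:
  assumes "(tL, dL, tR, dR) \<in> Phi" and "alpha (tL, dL, tR, dR) < 0" and "dL * dR \<ge> -1"
  shows "g (tL, dL, tR, dR) \<in> Phi"
proof -
  have "\<bar>dR + 1\<bar> < \<bar>tR\<bar>"
    using assms(1) by (auto simp: Phi_def)
  then have "(dR + 1)\<^sup>2 < tR\<^sup>2"
    by (metis abs_le_square_iff not_le)
  then have "tR\<^sup>2 - 2 * dR > \<bar>dR\<^sup>2 + 1\<bar>"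
    by (simp add: power2_eq_square algebra_simps)
  moreover have "tL * tR - dL - dR < - \<bar>dL * dR + 1\<bar>"
    using assms(2,3) by (simp add: alpha_def algebra_simps)
  ultimately show ?thesis
    by (simp add: g_def Phi_def)
qed

lemma g_mem_Phi1:
  assumes "\<xi> \<in> Phi2" and "alpha \<xi> < 0"
  shows "g \<xi> \<in> Phi1"
proof -
  obtain tL dL tR dR where \<xi>: "\<xi> = (tL, dL, tR, dR)"
    by (cases \<xi>) auto
  have "dL < 0" "dR < 0"
    using assms(1) by (auto simp: Phi2_def \<xi>)
  then have "dL * dR > 0" "dR\<^sup>2 > 0"
    by (auto simp: mult_neg_neg)
  moreover have "g \<xi> \<in> Phi"
    using assms \<open>dL * dR > 0\<close> g_mem_Phi[of tL dL tR dR] by (simp add: Phi2_def \<xi>)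
  ultimately show ?thesis
    by (simp add: Phi1_def g_def \<xi>)
qed

theorem proposition7p1:
  fixes \<xi> :: param and n :: nat
  assumes "n \<ge> 1" and "\<xi> \<in> R2 n"
  shows "g \<xi> \<in> R1 (n - 1)"
proof -
  obtain m where n: "n = Suc m"
    using assms(1) by (cases n) auto
  have "g \<xi> \<in> Phi1"
    using assms(2) g_mem_Phi1 by (simp add: R2_def)
  with assms(2) show ?thesis
    by (simp add: R1_def R2_def n funpow_swap1)
qed

end
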